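(* Let $T$ be an $n$-taxon tree and $\widetilde\phi_T:\mathbb C^N\to\mathbb C^{\kappa^n}$ a polynomial parameterization map of a phylogenetic model $\mathcal M$ on $T$, with homogeneous phylogenetic ideal $\widetilde J_T$. Let $\phi_T:\mathbb C^N\times\mathbb C^\kappa\to\mathbb C^{\kappa^n}$ be the parameterization of the $\mathcal M$+I model, $$\phi_T(\mathbf s,(\delta,\pi_I))=(1-\delta)\widetilde\phi_T(\mathbf s)+\delta\,\mathrm{diag}(\pi_I),$$ with homogeneous phylogenetic ideal $J_T$. Let $P_{eq}=\{p_{ii\dots i}: i\in\{1,\dots,\kappa\}\}$ and let $P'$ be the set of all other indeterminates $p_{i_1\dots i_n}$. Then $$J_T=\left(\widetilde J_T\cap\mathbb C[P']\right)\mathbb C[P],$$ i.e. $J_T$ is generated by the elements of $\widetilde J_T$ not involving the variables in $P_{eq}$.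
   Context: $\mathbb C[P]$ is the polynomial ring in the $\kappa^n$ indeterminates $p_{i_1\dots i_n}$, $i_k\in\{1,\dots,\kappa\}$, and $\mathbb C[P']$ is its subring in the indeterminates of $P'$. Here $(\delta,\pi_I)\in\mathbb C\times\mathbb C^{\kappa-1}$ are the remaining coordinates of $\mathbb C^\kappa$ (the class size $\delta$ and the invariable-site state distribution $\pi_I$, a vector in $\mathbb C^\kappa$ whose entries sum to 1), and $\mathrm{diag}(\pi_I)$ is the $\kappa\times\dots\times\kappa$ array with entry $\pi_I(i)$ at position $(i,\dots,i)$ and zeros elsewhere. For a polynomial parameterization $\psi$ with values in $\mathbb C^{\kappa^n}$, its (affine) phylogenetic ideal is the ideal of all polynomials in $\mathbb C[P]$ vanishing on the image of $\psi$, and its homogeneous phylogenetic ideal is the ideal generated by the homogeneous polynomials in that ideal; equivalently, the ideal of polynomials vanishing on the cone $\{t\,\psi(\mathbf x): t\in\mathbb C\}$ over the image. *)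

theory Defs
  imports Complex_Main "HOL-Library.Poly_Mapping"
begin

text \<open>Multivariate polynomials with complex coefficients in indeterminates of type 'v:
  finitely supported maps from monomials (finitely supported exponent vectors) to coefficients.\<close>
type_synonym 'v mpoly = "('v \<Rightarrow>\<^sub>0 nat) \<Rightarrow>\<^sub>0 complex"

definition mpoly_eval :: "('v \<Rightarrow> complex) \<Rightarrow> 'v mpoly \<Rightarrow> complex" where
  "mpoly_eval x f =
     (\<Sum>m\<in>Poly_Mapping.keys f. Poly_Mapping.lookup f m *
        (\<Prod>v\<in>Poly_Mapping.keys m. x v ^ Poly_Mapping.lookup m v))"

definition mpoly_vars :: "'v mpoly \<Rightarrow> 'v set" where
  "mpoly_vars f = (\<Union>m\<in>Poly_Mapping.keys f. Poly_Mapping.keys m)"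

definition monomial_degree :: "('v \<Rightarrow>\<^sub>0 nat) \<Rightarrow> nat" where
  "monomial_degree m = (\<Sum>v\<in>Poly_Mapping.keys m. Poly_Mapping.lookup m v)"

definition homogeneous :: "'v mpoly \<Rightarrow> bool" where
  "homogeneous f \<longleftrightarrow> (\<exists>d. \<forall>m\<in>Poly_Mapping.keys f. monomial_degree m = d)"

definition ideal_gen :: "'v mpoly set \<Rightarrow> 'v mpoly set" where
  "ideal_gen S = {f. \<exists>F c. finite F \<and> F \<subseteq> S \<and> f = (\<Sum>g\<in>F. c g * g)}"

definition vanishing_ideal :: "('v \<Rightarrow> complex) set \<Rightarrow> 'v mpoly set" where
  "vanishing_ideal V = {f. \<forall>x\<in>V. mpoly_eval x f = 0}"

definition hom_phylo_ideal :: "('v \<Rightarrow> complex) set \<Rightarrow> 'v mpoly set" where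
  "hom_phylo_ideal V = ideal_gen {f. homogeneous f \<and> f \<in> vanishing_ideal V}"

text \<open>Positions (i_1,...,i_n) of a kappa^n array are maps taxa => states.
  A position is diagonal if all entries coincide, i.e. it is (i,...,i).\<close>
definition diag_pos :: "('n \<Rightarrow> 'k) \<Rightarrow> bool" where
  "diag_pos i \<longleftrightarrow> (\<exists>a. i = (\<lambda>_. a))"

definition diag_array :: "('k \<Rightarrow> complex) \<Rightarrow> ('n \<Rightarrow> 'k) \<Rightarrow> complex" where
  "diag_array \<pi> i = (if diag_pos i then \<pi> (THE a. i = (\<lambda>_. a)) else 0)"

definition P_nondiag :: "('n \<Rightarrow> 'k) set" where
  "P_nondiag = {i. \<not> diag_pos i}"

end

theory Submission
  imports Defs "HOL-Analysis.Analysis"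
begin

text \<open>A polynomial vanishes on the cone over V iff its homogeneous components vanish on V,
  so both homogeneous ideals are vanishing ideals of cones. The cone over the +I model is
  dense in the cylinder Q of arrays whose off-diagonal part is t times a point of the
  original model and whose diagonal is arbitrary: if W is the total diagonal excess over
  that point, then T = t + W, \<delta> = W / T and \<pi> = excess / W exhibit the array as T times
  a point of the +I model, and the exceptional cases W = 0, T = 0 are avoided by perturbing
  one diagonal entry. The vanishing ideal of such a cylinder is generated by its elements in
  the off-diagonal variables: expanding in powers of a diagonal variable, each coefficient
  vanishes on Q again and involves fewer diagonal variables. Finally a polynomial in the
  off-diagonal variables vanishes on Q iff it vanishes on the cone over the original model.\<close>

definition monom_eval :: "('v \<Rightarrow> complex) \<Rightarrow> ('v \<Rightarrow>\<^sub>0 nat) \<Rightarrow> complex" where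
  "monom_eval x m = (\<Prod>v\<in>Poly_Mapping.keys m. x v ^ Poly_Mapping.lookup m v)"

lemma mpoly_eval_eq_sum_superset:
  assumes "finite K" "Poly_Mapping.keys f \<subseteq> K"
  shows "mpoly_eval x f = (\<Sum>m\<in>K. Poly_Mapping.lookup f m * monom_eval x m)"
  unfolding mpoly_eval_def monom_eval_def
  by (rule sum.mono_neutral_left[OF assms]) (auto simp: in_keys_iff)

lemma monom_eval_eq_prod_superset:
  assumes "finite V" "Poly_Mapping.keys m \<subseteq> V"
  shows "monom_eval x m = (\<Prod>v\<in>V. x v ^ Poly_Mapping.lookup m v)"
  unfolding monom_eval_def
  by (rule prod.mono_neutral_left[OF assms]) (auto simp: in_keys_iff)

lemma monom_eval_add: "monom_eval x (m1 + m2) = monom_eval x m1 * monom_eval x m2"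
proof -
  let ?V = "Poly_Mapping.keys m1 \<union> Poly_Mapping.keys m2"
  have "monom_eval x (m1 + m2) = (\<Prod>v\<in>?V. x v ^ Poly_Mapping.lookup (m1 + m2) v)"
    using keys_add[of m1 m2] by (intro monom_eval_eq_prod_superset) auto
  also have "\<dots> = (\<Prod>v\<in>?V. x v ^ Poly_Mapping.lookup m1 v) * (\<Prod>v\<in>?V. x v ^ Poly_Mapping.lookup m2 v)"
    by (simp add: lookup_add power_add prod.distrib)
  also have "\<dots> = monom_eval x m1 * monom_eval x m2"
    by (subst (1 2) monom_eval_eq_prod_superset[where V = ?V]) auto
  finally show ?thesis .
qed

lemma monom_eval_single: "monom_eval x (Poly_Mapping.single v j) = x v ^ j"
  by (cases "j = 0") (auto simp: monom_eval_def)

lemma monom_eval_scale: "monom_eval (\<lambda>v. t * x v) m = t ^ monomial_degree m * monom_eval x m"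
  by (simp add: monom_eval_def monomial_degree_def power_mult_distrib prod.distrib power_sum)

lemma mpoly_eval_0 [simp]: "mpoly_eval x 0 = 0"
  by (simp add: mpoly_eval_def)

lemma mpoly_eval_single [simp]: "mpoly_eval x (Poly_Mapping.single m c) = c * monom_eval x m"
  by (simp add: mpoly_eval_def monom_eval_def)

lemma mpoly_eval_add: "mpoly_eval x (f + g) = mpoly_eval x f + mpoly_eval x g"
proof -
  let ?K = "Poly_Mapping.keys f \<union> Poly_Mapping.keys g"
  have "mpoly_eval x (f + g) = (\<Sum>m\<in>?K. Poly_Mapping.lookup (f + g) m * monom_eval x m)"
    using keys_add[of f g] by (intro mpoly_eval_eq_sum_superset) auto
  also have "\<dots> = (\<Sum>m\<in>?K. Poly_Mapping.lookup f m * monom_eval x m)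
                + (\<Sum>m\<in>?K. Poly_Mapping.lookup g m * monom_eval x m)"
    by (simp add: lookup_add distrib_right sum.distrib)
  also have "\<dots> = mpoly_eval x f + mpoly_eval x g"
    by (subst (1 2) mpoly_eval_eq_sum_superset[where K = ?K]) auto
  finally show ?thesis .
qed

lemma mpoly_eval_sum: "mpoly_eval x (sum F A) = (\<Sum>a\<in>A. mpoly_eval x (F a))"
  by (induction A rule: infinite_finite_induct) (auto simp: mpoly_eval_add)

lemma poly_mapping_eq_sum_single:
  "f = (\<Sum>m\<in>Poly_Mapping.keys f. Poly_Mapping.single m (Poly_Mapping.lookup f m))"
proof (rule poly_mapping_eqI)
  fix k
  show "Poly_Mapping.lookup f k =
    Poly_Mapping.lookup (\<Sum>m\<in>Poly_Mapping.keys f. Poly_Mapping.single m (Poly_Mapping.lookup f m)) k"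
    by (cases "k \<in> Poly_Mapping.keys f") (auto simp: lookup_sum lookup_single when_def in_keys_iff)
qed

lemma mpoly_eval_mult: "mpoly_eval x (f * g) = mpoly_eval x f * mpoly_eval x g"
proof -
  have "f * g = (\<Sum>a\<in>Poly_Mapping.keys f. \<Sum>b\<in>Poly_Mapping.keys g.
      Poly_Mapping.single (a + b) (Poly_Mapping.lookup f a * Poly_Mapping.lookup g b))"
    by (subst (1) poly_mapping_eq_sum_single[of f], subst (1) poly_mapping_eq_sum_single[of g])
      (simp add: sum_product mult_single)
  then have "mpoly_eval x (f * g) = (\<Sum>a\<in>Poly_Mapping.keys f. \<Sum>b\<in>Poly_Mapping.keys g.
      (Poly_Mapping.lookup f a * monom_eval x a) * (Poly_Mapping.lookup g b * monom_eval x b))"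
    by (simp add: mpoly_eval_sum monom_eval_add mult_ac)
  also have "\<dots> = mpoly_eval x f * mpoly_eval x g"
    by (simp add: mpoly_eval_def monom_eval_def sum_product)
  finally show ?thesis .
qed

lemma finite_mpoly_vars [simp]: "finite (mpoly_vars f)"
  by (simp add: mpoly_vars_def)

lemma mpoly_eval_cong:
  assumes "\<And>v. v \<in> mpoly_vars f \<Longrightarrow> x v = x' v"
  shows "mpoly_eval x f = mpoly_eval x' f"
  unfolding mpoly_eval_def
  by (intro sum.cong refl arg_cong2[where f = "(*)"] prod.cong arg_cong2[where f = power] assms)
    (auto simp: mpoly_vars_def)

lemma mpoly_eval_scale_homogeneous:
  assumes "\<forall>m\<in>Poly_Mapping.keys f. monomial_degree m = d"
  shows "mpoly_eval (\<lambda>v. t * x v) f = t ^ d * mpoly_eval x f"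
  unfolding mpoly_eval_eq_sum_superset[OF finite_keys order_refl] monom_eval_scale sum_distrib_left
  by (intro sum.cong) (auto simp: assms)

lemma mpoly_eval_line_continuous:
  "continuous_on UNIV (\<lambda>e::complex. mpoly_eval (\<lambda>v. x v + e * w v) f)"
  unfolding mpoly_eval_def by (intro continuous_intros)

lemma mpoly_eval_eq_0_if_cofinite_on_line:
  assumes "finite E" "\<And>e. e \<notin> E \<Longrightarrow> mpoly_eval (\<lambda>v. x v + e * w v) f = 0"
  shows "mpoly_eval x f = 0"
proof -
  let ?g = "\<lambda>e. mpoly_eval (\<lambda>v. x v + e * w v) f"
  obtain r where r: "r > 0" "\<forall>a\<in>E. a \<noteq> 0 \<longrightarrow> r \<le> dist 0 a"
    using finite_set_avoid[OF assms(1), of 0] by blast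
  have "eventually (\<lambda>e. ?g e = 0) (at 0)"
    unfolding eventually_at using r assms(2) by (intro exI[of _ r]) (auto simp: dist_commute)
  then have "(?g \<longlongrightarrow> 0) (at 0)"
    by (rule tendsto_eventually)
  moreover have "(?g \<longlongrightarrow> ?g 0) (at 0)"
    using mpoly_eval_line_continuous[of x w f]
    unfolding continuous_on_eq_continuous_at[OF open_UNIV] isCont_def by blast
  ultimately have "?g 0 = 0"
    using tendsto_unique[OF at_neq_bot] by blast
  then show ?thesis by simp
qed

lemma polyfun_coeff_eq_0:
  fixes c :: "nat \<Rightarrow> complex"
  assumes "finite D" "\<And>t. (\<Sum>d\<in>D. c d * t ^ d) = 0" "d \<in> D"
  shows "c d = 0"
proof -
  let ?c = "\<lambda>i. if i \<in> D then c i else 0"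
  have D_sub: "D \<subseteq> {..Max D}"
    using assms(1) by auto
  have "(\<Sum>i\<le>Max D. ?c i * t ^ i) = (\<Sum>i\<in>D. c i * t ^ i)" for t :: complex
    by (rule sum.mono_neutral_cong_right[OF finite_atMost D_sub]) auto
  then have "(\<Sum>i\<le>Max D. ?c i * t ^ i) = 0" for t :: complex
    using assms(2) by simp
  then have "\<forall>i\<le>Max D. ?c i = 0"
    by (intro polyfun_eq_0[THEN iffD1] allI)
  then show ?thesis
    using assms(3) D_sub by auto
qed

lemma ideal_gen_0: "0 \<in> ideal_gen S"
  unfolding ideal_gen_def by (intro CollectI exI[of _ "{}"]) auto

lemma ideal_gen_base: "g \<in> S \<Longrightarrow> g \<in> ideal_gen S"
  unfolding ideal_gen_def by (intro CollectI exI[of _ "{g}"] exI[of _ "\<lambda>_. 1"]) auto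

lemma ideal_gen_add:
  assumes "f1 \<in> ideal_gen S" "f2 \<in> ideal_gen S"
  shows "f1 + f2 \<in> ideal_gen S"
proof -
  obtain F1 c1 where 1: "finite F1" "F1 \<subseteq> S" "f1 = (\<Sum>g\<in>F1. c1 g * g)"
    using assms(1) unfolding ideal_gen_def by blast
  obtain F2 c2 where 2: "finite F2" "F2 \<subseteq> S" "f2 = (\<Sum>g\<in>F2. c2 g * g)"
    using assms(2) unfolding ideal_gen_def by blast
  let ?c1 = "\<lambda>g. if g \<in> F1 then c1 g else 0" and ?c2 = "\<lambda>g. if g \<in> F2 then c2 g else 0"
  have "(\<Sum>g\<in>F1 \<union> F2. ?c1 g * g) = f1"
    unfolding 1(3) using 1(1) 2(1) by (intro sum.mono_neutral_cong_right) auto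
  moreover have "(\<Sum>g\<in>F1 \<union> F2. ?c2 g * g) = f2"
    unfolding 2(3) using 1(1) 2(1) by (intro sum.mono_neutral_cong_right) auto
  ultimately have "f1 + f2 = (\<Sum>g\<in>F1 \<union> F2. (?c1 g + ?c2 g) * g)"
    by (simp add: distrib_right sum.distrib)
  then show ?thesis
    unfolding ideal_gen_def using 1 2
    by (intro CollectI exI[of _ "F1 \<union> F2"] exI[of _ "\<lambda>g. ?c1 g + ?c2 g"]) auto
qed

lemma ideal_gen_mult:
  assumes "f \<in> ideal_gen S"
  shows "a * f \<in> ideal_gen S"
proof -
  obtain F c where F: "finite F" "F \<subseteq> S" "f = (\<Sum>g\<in>F. c g * g)"
    using assms unfolding ideal_gen_def by blast
  have "a * f = (\<Sum>g\<in>F. (a * c g) * g)"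
    unfolding F(3) sum_distrib_left by (simp add: mult.assoc)
  then show ?thesis
    unfolding ideal_gen_def using F by (intro CollectI exI[of _ F] exI[of _ "\<lambda>g. a * c g"]) auto
qed

lemma ideal_gen_sum: "(\<And>a. a \<in> A \<Longrightarrow> F a \<in> ideal_gen S) \<Longrightarrow> sum F A \<in> ideal_gen S"
  by (induction A rule: infinite_finite_induct) (auto simp: ideal_gen_0 ideal_gen_add)

lemma ideal_gen_subset_vanishing_ideal:
  assumes "S \<subseteq> vanishing_ideal V"
  shows "ideal_gen S \<subseteq> vanishing_ideal V"
proof
  fix f assume "f \<in> ideal_gen S"
  then obtain F c where F: "finite F" "F \<subseteq> S" "f = (\<Sum>g\<in>F. c g * g)"
    unfolding ideal_gen_def by blast
  show "f \<in> vanishing_ideal V"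
    using F(2) assms unfolding F(3) vanishing_ideal_def
    by (auto simp: mpoly_eval_sum mpoly_eval_mult intro!: sum.neutral)
qed

lemma vanishing_ideal_antimono: "A \<subseteq> B \<Longrightarrow> vanishing_ideal B \<subseteq> vanishing_ideal A"
  unfolding vanishing_ideal_def by auto

lemma vanishing_ideal_restrict_vars_eq:
  assumes "A \<subseteq> B" "\<And>x. x \<in> B \<Longrightarrow> \<exists>a\<in>A. \<forall>v\<in>N. a v = x v"
  shows "vanishing_ideal B \<inter> {f. mpoly_vars f \<subseteq> N} = vanishing_ideal A \<inter> {f. mpoly_vars f \<subseteq> N}"
proof
  show "vanishing_ideal B \<inter> {f. mpoly_vars f \<subseteq> N} \<subseteq> vanishing_ideal A \<inter> {f. mpoly_vars f \<subseteq> N}"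
    using vanishing_ideal_antimono[OF assms(1)] by blast
next
  show "vanishing_ideal A \<inter> {f. mpoly_vars f \<subseteq> N} \<subseteq> vanishing_ideal B \<inter> {f. mpoly_vars f \<subseteq> N}"
  proof (clarsimp simp: vanishing_ideal_def)
    fix f x assume f: "\<forall>a\<in>A. mpoly_eval a f = 0" "mpoly_vars f \<subseteq> N" and "x \<in> B"
    then obtain a where "a \<in> A" "\<forall>v\<in>N. a v = x v"
      using assms(2) by blast
    then have "mpoly_eval x f = mpoly_eval a f"
      using f(2) by (intro mpoly_eval_cong) auto
    then show "mpoly_eval x f = 0"
      using f(1) \<open>a \<in> A\<close> by simp
  qed
qed

definition cone :: "('v \<Rightarrow> complex) set \<Rightarrow> ('v \<Rightarrow> complex) set" where
  "cone V = {(\<lambda>v. t * x v) | t x. x \<in> V}"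

definition homogeneous_component :: "nat \<Rightarrow> 'v mpoly \<Rightarrow> 'v mpoly" where
  "homogeneous_component d f =
    (\<Sum>m\<in>{m\<in>Poly_Mapping.keys f. monomial_degree m = d}. Poly_Mapping.single m (Poly_Mapping.lookup f m))"

lemma keys_homogeneous_component:
  "Poly_Mapping.keys (homogeneous_component d f) \<subseteq> {m\<in>Poly_Mapping.keys f. monomial_degree m = d}"
  unfolding homogeneous_component_def by (rule order_trans[OF keys_sum]) auto

lemma mpoly_eval_scale_homogeneous_component:
  "mpoly_eval (\<lambda>v. t * x v) (homogeneous_component d f) = t ^ d * mpoly_eval x (homogeneous_component d f)"
  using keys_homogeneous_component by (intro mpoly_eval_scale_homogeneous) blast

lemma homogeneous_homogeneous_component: "homogeneous (homogeneous_component d f)"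
  unfolding homogeneous_def using keys_homogeneous_component by blast

lemma sum_homogeneous_components:
  "(\<Sum>d\<in>monomial_degree ` Poly_Mapping.keys f. homogeneous_component d f) = f"
  unfolding homogeneous_component_def
  by (subst sum.group) (auto simp: poly_mapping_eq_sum_single[symmetric])

lemma hom_phylo_ideal_eq_vanishing_ideal_cone: "hom_phylo_ideal V = vanishing_ideal (cone V)"
proof
  show "hom_phylo_ideal V \<subseteq> vanishing_ideal (cone V)"
    unfolding hom_phylo_ideal_def
  proof (rule ideal_gen_subset_vanishing_ideal, safe)
    fix h assume h: "homogeneous h" "h \<in> vanishing_ideal V"
    then obtain d where d: "\<forall>m\<in>Poly_Mapping.keys h. monomial_degree m = d"
      unfolding homogeneous_def by blast
    show "h \<in> vanishing_ideal (cone V)"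
      using h(2) unfolding vanishing_ideal_def cone_def
      by (auto simp: mpoly_eval_scale_homogeneous[OF d])
  qed
next
  show "vanishing_ideal (cone V) \<subseteq> hom_phylo_ideal V"
  proof
    fix f assume f: "f \<in> vanishing_ideal (cone V)"
    let ?D = "monomial_degree ` Poly_Mapping.keys f"
    have "mpoly_eval x (homogeneous_component d f) = 0" if "d \<in> ?D" "x \<in> V" for d x
    proof (rule polyfun_coeff_eq_0[OF _ _ \<open>d \<in> ?D\<close>])
      fix t
      have "(\<lambda>v. t * x v) \<in> cone V"
        using \<open>x \<in> V\<close> unfolding cone_def by blast
      then have "0 = mpoly_eval (\<lambda>v. t * x v) f"
        using f unfolding vanishing_ideal_def by auto
      also have "\<dots> = (\<Sum>d\<in>?D. mpoly_eval (\<lambda>v. t * x v) (homogeneous_component d f))"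
        by (simp add: mpoly_eval_sum[symmetric] sum_homogeneous_components)
      also have "\<dots> = (\<Sum>d\<in>?D. mpoly_eval x (homogeneous_component d f) * t ^ d)"
        by (simp add: mpoly_eval_scale_homogeneous_component mult.commute)
      finally show "(\<Sum>d\<in>?D. mpoly_eval x (homogeneous_component d f) * t ^ d) = 0" ..
    qed simp
    then have "(\<Sum>d\<in>?D. homogeneous_component d f) \<in> hom_phylo_ideal V"
      unfolding hom_phylo_ideal_def vanishing_ideal_def
      by (intro ideal_gen_sum ideal_gen_base) (simp add: homogeneous_homogeneous_component)
    then show "f \<in> hom_phylo_ideal V"
      by (simp add: sum_homogeneous_components)
  qed
qed

lemma lookup_single_add_diff_single:
  "Poly_Mapping.lookup m v = j \<Longrightarrow> Poly_Mapping.single v j + (m - Poly_Mapping.single v j) = m"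
  for m :: "'v \<Rightarrow>\<^sub>0 nat"
  by (rule poly_mapping_eqI) (auto simp: lookup_add lookup_minus lookup_single when_def)

lemma mpoly_expand_in_var:
  fixes f :: "'v mpoly" and y :: 'v
  obtains J g where "finite J"
    and "f = (\<Sum>j\<in>J. Poly_Mapping.single (Poly_Mapping.single y j) 1 * g j)"
    and "\<And>j. mpoly_vars (g j) \<subseteq> mpoly_vars f - {y}"
proof
  let ?M = "\<lambda>j. {m\<in>Poly_Mapping.keys f. Poly_Mapping.lookup m y = j}"
  define J where "J = (\<lambda>m. Poly_Mapping.lookup m y) ` Poly_Mapping.keys f"
  define g where "g j = (\<Sum>m\<in>?M j. Poly_Mapping.single (m - Poly_Mapping.single y j) (Poly_Mapping.lookup f m))"
    for j
  show "finite J"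
    unfolding J_def by simp
  have "f = (\<Sum>j\<in>J. \<Sum>m\<in>?M j. Poly_Mapping.single m (Poly_Mapping.lookup f m))"
    unfolding J_def by (subst sum.group) (auto simp: poly_mapping_eq_sum_single[symmetric])
  also have "\<dots> = (\<Sum>j\<in>J. Poly_Mapping.single (Poly_Mapping.single y j) 1 * g j)"
    unfolding g_def sum_distrib_left mult_single
    by (intro sum.cong refl arg_cong2[where f = Poly_Mapping.single])
      (auto simp: lookup_single_add_diff_single)
  finally show "f = (\<Sum>j\<in>J. Poly_Mapping.single (Poly_Mapping.single y j) 1 * g j)" .
  show "mpoly_vars (g j) \<subseteq> mpoly_vars f - {y}" for j
  proof
    fix v assume "v \<in> mpoly_vars (g j)"
    then obtain m' where m': "m' \<in> Poly_Mapping.keys (g j)" "v \<in> Poly_Mapping.keys m'"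
      unfolding mpoly_vars_def by blast
    then obtain m where m: "m \<in> ?M j" "m' = m - Poly_Mapping.single y j"
      using keys_sum unfolding g_def by (fastforce split: if_splits)
    then have "v \<in> Poly_Mapping.keys m" "v \<noteq> y"
      using m'(2) by (auto simp: in_keys_iff lookup_minus lookup_single when_def split: if_splits)
    then show "v \<in> mpoly_vars f - {y}"
      using m(1) unfolding mpoly_vars_def by blast
  qed
qed

lemma vanishing_ideal_cylinder:
  assumes cylinder: "\<And>x v c. x \<in> Q \<Longrightarrow> v \<notin> N \<Longrightarrow> x(v := c) \<in> Q"
  shows "vanishing_ideal Q = ideal_gen (vanishing_ideal Q \<inter> {f. mpoly_vars f \<subseteq> N})"
proof
  show "ideal_gen (vanishing_ideal Q \<inter> {f. mpoly_vars f \<subseteq> N}) \<subseteq> vanishing_ideal Q"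
    by (rule ideal_gen_subset_vanishing_ideal) blast
  show "vanishing_ideal Q \<subseteq> ideal_gen (vanishing_ideal Q \<inter> {f. mpoly_vars f \<subseteq> N})"
  proof
    fix f assume "f \<in> vanishing_ideal Q"
    then show "f \<in> ideal_gen (vanishing_ideal Q \<inter> {f. mpoly_vars f \<subseteq> N})"
    proof (induction "card (mpoly_vars f)" arbitrary: f rule: less_induct)
      case less
      show ?case
      proof (cases "mpoly_vars f \<subseteq> N")
        case True
        then show ?thesis
          using less.prems by (intro ideal_gen_base) blast
      next
        case False
        then obtain y where y: "y \<in> mpoly_vars f" "y \<notin> N"
          by blast
        obtain J g where J: "finite J"
          and f_eq: "f = (\<Sum>j\<in>J. Poly_Mapping.single (Poly_Mapping.single y j) 1 * g j)"
          and vars_g: "\<And>j. mpoly_vars (g j) \<subseteq> mpoly_vars f - {y}"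
          using mpoly_expand_in_var[of f y] by blast
        have "g j \<in> vanishing_ideal Q" if "j \<in> J" for j
          unfolding vanishing_ideal_def
        proof safe
          fix x assume "x \<in> Q"
          show "mpoly_eval x (g j) = 0"
          proof (rule polyfun_coeff_eq_0[OF J _ \<open>j \<in> J\<close>])
            fix c
            have "mpoly_eval (x(y := c)) (g i) = mpoly_eval x (g i)" for i
              using vars_g[of i] by (intro mpoly_eval_cong) auto
            then have "mpoly_eval (x(y := c)) f = (\<Sum>i\<in>J. mpoly_eval x (g i) * c ^ i)"
              by (subst f_eq) (simp add: mpoly_eval_sum mpoly_eval_mult monom_eval_single mult.commute)
            also have "mpoly_eval (x(y := c)) f = 0"
              using less.prems cylinder[OF \<open>x \<in> Q\<close> y(2)] unfolding vanishing_ideal_def by blast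
            finally show "(\<Sum>i\<in>J. mpoly_eval x (g i) * c ^ i) = 0" ..
          qed
        qed
        moreover have "card (mpoly_vars (g j)) < card (mpoly_vars f)" for j
          using vars_g[of j] y(1) by (intro psubset_card_mono finite_mpoly_vars) blast
        ultimately have "(\<Sum>j\<in>J. Poly_Mapping.single (Poly_Mapping.single y j) 1 * g j)
            \<in> ideal_gen (vanishing_ideal Q \<inter> {f. mpoly_vars f \<subseteq> N})"
          using less.hyps by (intro ideal_gen_sum ideal_gen_mult) blast
        then show ?thesis
          using f_eq by simp
      qed
    qed
  qed
qed

lemma diag_array_const [simp]: "diag_array \<pi> (\<lambda>_. a) = \<pi> a"
  by (simp add: diag_array_def diag_pos_def fun_eq_iff)

lemma diag_array_nondiag: "i \<in> P_nondiag \<Longrightarrow> diag_array \<pi> i = 0"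
  by (simp add: diag_array_def P_nondiag_def)

definition invariable_sites_model ::
    "('s \<Rightarrow> ('n \<Rightarrow> 'k::finite) \<Rightarrow> complex) \<Rightarrow> (('n \<Rightarrow> 'k) \<Rightarrow> complex) set" where
  "invariable_sites_model F =
    (\<lambda>(s, \<delta>, \<pi>) i. (1 - \<delta>) * F s i + \<delta> * diag_array \<pi> i) ` {(s, \<delta>, \<pi>). (\<Sum>k\<in>UNIV. \<pi> k) = 1}"

definition offdiag_cylinder :: "('s \<Rightarrow> ('n \<Rightarrow> 'k) \<Rightarrow> complex) \<Rightarrow> (('n \<Rightarrow> 'k) \<Rightarrow> complex) set" where
  "offdiag_cylinder F = {x. \<exists>t s. \<forall>i\<in>P_nondiag. x i = t * F s i}"

lemma offdiag_cylinder_fun_upd: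
  "x \<in> offdiag_cylinder F \<Longrightarrow> v \<notin> P_nondiag \<Longrightarrow> x(v := c) \<in> offdiag_cylinder F"
  unfolding offdiag_cylinder_def by auto

lemma vanishing_ideal_offdiag_cylinder_restrict_vars:
  "vanishing_ideal (offdiag_cylinder F) \<inter> {f. mpoly_vars f \<subseteq> P_nondiag}
    = vanishing_ideal (cone (range F)) \<inter> {f. mpoly_vars f \<subseteq> P_nondiag}"
proof (rule vanishing_ideal_restrict_vars_eq)
  show "cone (range F) \<subseteq> offdiag_cylinder F"
    unfolding cone_def offdiag_cylinder_def by blast
  show "\<exists>a\<in>cone (range F). \<forall>i\<in>P_nondiag. a i = x i" if x: "x \<in> offdiag_cylinder F" for x
  proof -
    obtain t s where "\<forall>i\<in>P_nondiag. x i = t * F s i"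
      using x unfolding offdiag_cylinder_def by blast
    moreover have "(\<lambda>i. t * F s i) \<in> cone (range F)"
      unfolding cone_def by blast
    ultimately show ?thesis by auto
  qed
qed

lemma cone_invariable_sites_memI:
  fixes F :: "'s \<Rightarrow> ('n \<Rightarrow> 'k::finite) \<Rightarrow> complex"
  assumes offdiag: "\<And>i. i \<in> P_nondiag \<Longrightarrow> x i = t * F s i"
    and excess: "(\<Sum>k\<in>UNIV. x (\<lambda>_. k) - t * F s (\<lambda>_. k)) = W"
    and "W \<noteq> 0" "t + W \<noteq> 0"
  shows "x \<in> cone (invariable_sites_model F)"
proof -
  define T where "T = t + W"
  define \<delta> where "\<delta> = W / T"
  define \<pi> where "\<pi> k = (x (\<lambda>_. k) - t * F s (\<lambda>_. k)) / W" for k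
  have "(\<Sum>k\<in>UNIV. \<pi> k) = 1"
    unfolding \<pi>_def sum_divide_distrib[symmetric] excess using \<open>W \<noteq> 0\<close> by simp
  then have "(\<lambda>i. (1 - \<delta>) * F s i + \<delta> * diag_array \<pi> i) \<in> invariable_sites_model F"
    unfolding invariable_sites_model_def by (intro image_eqI[where x = "(s, \<delta>, \<pi>)"]) auto
  moreover have "x i = T * ((1 - \<delta>) * F s i + \<delta> * diag_array \<pi> i)" for i
  proof -
    have "T * (1 - \<delta>) = t" "T * \<delta> = W"
      using \<open>t + W \<noteq> 0\<close> by (simp_all add: T_def \<delta>_def field_simps)
    then have "T * ((1 - \<delta>) * F s i + \<delta> * diag_array \<pi> i) = t * F s i + W * diag_array \<pi> i"
      by (metis distrib_left mult.assoc)
    moreover have "x i = t * F s i + W * diag_array \<pi> i"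
    proof (cases "i \<in> P_nondiag")
      case True
      then show ?thesis by (simp add: offdiag diag_array_nondiag)
    next
      case False
      then obtain a where "i = (\<lambda>_. a)"
        by (auto simp: P_nondiag_def diag_pos_def)
      then show ?thesis
        using \<open>W \<noteq> 0\<close> by (simp add: \<pi>_def)
    qed
    ultimately show ?thesis by simp
  qed
  ultimately show ?thesis
    unfolding cone_def by (intro CollectI exI[of _ T]) (auto simp: fun_eq_iff)
qed

lemma cone_invariable_sites_subset_offdiag_cylinder:
  "cone (invariable_sites_model F) \<subseteq> offdiag_cylinder F"
proof
  fix x assume "x \<in> cone (invariable_sites_model F)"
  then obtain T s \<delta> \<pi> where "x = (\<lambda>i. T * ((1 - \<delta>) * F s i + \<delta> * diag_array \<pi> i))"
    unfolding cone_def invariable_sites_model_def by auto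
  then have "\<forall>i\<in>P_nondiag. x i = (T * (1 - \<delta>)) * F s i"
    by (simp add: diag_array_nondiag)
  then show "x \<in> offdiag_cylinder F"
    unfolding offdiag_cylinder_def by blast
qed

lemma vanishing_ideal_cone_invariable_sites:
  fixes F :: "'s \<Rightarrow> ('n \<Rightarrow> 'k::finite) \<Rightarrow> complex"
  shows "vanishing_ideal (cone (invariable_sites_model F)) = vanishing_ideal (offdiag_cylinder F)"
proof
  show "vanishing_ideal (offdiag_cylinder F) \<subseteq> vanishing_ideal (cone (invariable_sites_model F))"
    by (rule vanishing_ideal_antimono[OF cone_invariable_sites_subset_offdiag_cylinder])
  show "vanishing_ideal (cone (invariable_sites_model F)) \<subseteq> vanishing_ideal (offdiag_cylinder F)"
  proof (clarsimp simp: vanishing_ideal_def)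
    fix f x assume f: "\<forall>y\<in>cone (invariable_sites_model F). mpoly_eval y f = 0"
      and "x \<in> offdiag_cylinder F"
    then obtain t s where offdiag: "\<And>i. i \<in> P_nondiag \<Longrightarrow> x i = t * F s i"
      unfolding offdiag_cylinder_def by blast
    define d :: "'n \<Rightarrow> 'k" where "d = (\<lambda>_. undefined)"
    define W where "W = (\<Sum>k\<in>UNIV. x (\<lambda>_. k) - t * F s (\<lambda>_. k))"
    let ?x = "\<lambda>e v. x v + e * (if v = d then 1 else 0)"
    have "mpoly_eval (?x e) f = 0" if "e \<notin> {- W, - (t + W)}" for e
    proof -
      have "d \<notin> P_nondiag"
        unfolding d_def P_nondiag_def diag_pos_def by blast
      then have "?x e i = t * F s i" if "i \<in> P_nondiag" for i
        using that offdiag by auto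
      moreover have "(\<Sum>k\<in>UNIV. ?x e (\<lambda>_. k) - t * F s (\<lambda>_. k)) = W + e"
      proof -
        have "(\<Sum>k\<in>UNIV. ?x e (\<lambda>_. k) - t * F s (\<lambda>_. k))
            = (\<Sum>k\<in>UNIV. (x (\<lambda>_. k) - t * F s (\<lambda>_. k)) + (if k = undefined then e else 0))"
          by (intro sum.cong) (simp_all add: d_def fun_eq_iff)
        also have "\<dots> = W + e"
          by (simp add: W_def sum.distrib)
        finally show ?thesis .
      qed
      moreover have "W + e \<noteq> 0"
        using that by (simp add: add_eq_0_iff)
      moreover have "t + (W + e) \<noteq> 0"
        using that unfolding add.assoc[symmetric] by (simp add: add_eq_0_iff)
      ultimately have "?x e \<in> cone (invariable_sites_model F)"
        by (intro cone_invariable_sites_memI)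
      then show ?thesis
        using f by blast
    qed
    then show "mpoly_eval x f = 0"
      using mpoly_eval_eq_0_if_cofinite_on_line[of "{- W, - (t + W)}" x "\<lambda>v. if v = d then 1 else 0" f]
      by (meson finite.emptyI finite.insertI)
  qed
qed

theorem proposition9:
  fixes psi :: "('n::finite \<Rightarrow> 'k::finite) \<Rightarrow> ('p::finite) mpoly"
    and phit :: "('p \<Rightarrow> complex) \<Rightarrow> ('n \<Rightarrow> 'k) \<Rightarrow> complex"
    and phi :: "('p \<Rightarrow> complex) \<times> complex \<times> ('k \<Rightarrow> complex) \<Rightarrow> ('n \<Rightarrow> 'k) \<Rightarrow> complex"
  defines "phit \<equiv> (\<lambda>s i. mpoly_eval s (psi i))"
  defines "phi \<equiv> (\<lambda>(s, \<delta>, \<pi>) i. (1 - \<delta>) * phit s i + \<delta> * diag_array \<pi> i)"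
  shows "hom_phylo_ideal (phi ` {(s, \<delta>, \<pi>). (\<Sum>k\<in>UNIV. \<pi> k) = 1}) =
         ideal_gen (hom_phylo_ideal (phit ` UNIV) \<inter> {f. mpoly_vars f \<subseteq> P_nondiag})"
proof -
  have "phi ` {(s, \<delta>, \<pi>). (\<Sum>k\<in>UNIV. \<pi> k) = 1} = invariable_sites_model phit"
    unfolding phi_def invariable_sites_model_def ..
  then have "hom_phylo_ideal (phi ` {(s, \<delta>, \<pi>). (\<Sum>k\<in>UNIV. \<pi> k) = 1})
      = vanishing_ideal (offdiag_cylinder phit)"
    by (simp add: hom_phylo_ideal_eq_vanishing_ideal_cone vanishing_ideal_cone_invariable_sites)
  also have "\<dots> = ideal_gen (vanishing_ideal (offdiag_cylinder phit) \<inter> {f. mpoly_vars f \<subseteq> P_nondiag})"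
    by (intro vanishing_ideal_cylinder offdiag_cylinder_fun_upd)
  also have "vanishing_ideal (offdiag_cylinder phit) \<inter> {f. mpoly_vars f \<subseteq> P_nondiag}
      = hom_phylo_ideal (phit ` UNIV) \<inter> {f. mpoly_vars f \<subseteq> P_nondiag}"
    by (simp add: hom_phylo_ideal_eq_vanishing_ideal_cone vanishing_ideal_offdiag_cylinder_restrict_vars)
  finally show ?thesis .
qed

end
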